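(* Let $\Omega\subset\mathbb{R}^N$ be a bounded domain of class $C^{2,\beta}$, $p\ge1$, $\lambda>0$, and let $(\alpha_\lambda,\psi_\lambda)$ be a solution of $(\mathbf{P}_\lambda)$ with $\alpha_\lambda<0$. Let $\Omega_+=\{x\in\Omega:\alpha_\lambda+\lambda\psi_\lambda>0\}$, $\Omega_-=\{x\in\Omega:\alpha_\lambda+\lambda\psi_\lambda<0\}$ and $E_\lambda=\frac12\int_\Omega|\nabla\psi_\lambda|^2$. Then $$2E_\lambda=\int_{\Omega_+}|\nabla\psi_\lambda|^2-\frac{\alpha_\lambda}{\lambda},\qquad\int_{\Omega_-}|\nabla\psi_\lambda|^2=-\frac{\alpha_\lambda}\lambda,\qquad\int_{\{\alpha_\lambda+\lambda\psi_\lambda=0\}}|\nabla\psi_\lambda|^2=0.$$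
   Context: Problem $(\mathbf{P}_\lambda)$: find $(\alpha,\psi)\in\mathbb{R}\times C^{2,\beta}(\overline\Omega)$ with $-\Delta\psi=[\alpha+\lambda\psi]_+^p$ in $\Omega$, $\psi=0$ on $\partial\Omega$, $\int_\Omega[\alpha+\lambda\psi]_+^p=1$, where $[t]_+=\max\{t,0\}$. *)

theory Defs
  imports "HOL-Analysis.Analysis"
begin

definition partial :: "('a::euclidean_space \<Rightarrow> real) \<Rightarrow> 'a \<Rightarrow> 'a \<Rightarrow> real" where
  "partial f b x = frechet_derivative f (at x) b"

definition grad :: "('a::euclidean_space \<Rightarrow> real) \<Rightarrow> 'a \<Rightarrow> 'a" where
  "grad f x = (\<Sum>b\<in>Basis. partial f b x *\<^sub>R b)"

definition laplacian :: "('a::euclidean_space \<Rightarrow> real) \<Rightarrow> 'a \<Rightarrow> real" where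
  "laplacian f x = (\<Sum>b\<in>Basis. partial (partial f b) b x)"

definition holder_on :: "real \<Rightarrow> 'a::metric_space set \<Rightarrow> ('a \<Rightarrow> real) \<Rightarrow> bool" where
  "holder_on \<beta> S g \<longleftrightarrow> (\<exists>C. \<forall>x\<in>S. \<forall>y\<in>S. \<bar>g x - g y\<bar> \<le> C * dist x y powr \<beta>)"

definition C2beta_on :: "real \<Rightarrow> 'a::euclidean_space set \<Rightarrow> ('a \<Rightarrow> real) \<Rightarrow> bool" where
  "C2beta_on \<beta> S f \<longleftrightarrow>
     (\<forall>x\<in>S. f differentiable (at x)) \<and>
     (\<forall>b\<in>Basis. \<forall>x\<in>S. partial f b differentiable (at x)) \<and>
     (\<forall>b\<in>Basis. \<forall>c\<in>Basis. holder_on \<beta> S (partial (partial f b) c))"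

(* f \<in> C^{2,beta}(closure \<Omega>): C^{2,beta} in \<Omega>, with f and its first derivatives
   extending continuously to the closure (f itself is required continuous on the closure). *)
definition C2beta_closure :: "real \<Rightarrow> 'a::euclidean_space set \<Rightarrow> ('a \<Rightarrow> real) \<Rightarrow> bool" where
  "C2beta_closure \<beta> \<Omega> f \<longleftrightarrow>
     C2beta_on \<beta> \<Omega> f \<and> continuous_on (closure \<Omega>) f \<and>
     (\<forall>b\<in>Basis. uniformly_continuous_on \<Omega> (partial f b))"

definition C2beta_domain :: "real \<Rightarrow> 'a::euclidean_space set \<Rightarrow> bool" where
  "C2beta_domain \<beta> \<Omega> \<longleftrightarrow>
     open \<Omega> \<and> connected \<Omega> \<and> \<Omega> \<noteq> {} \<and> bounded \<Omega> \<and>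
     (\<forall>x0\<in>frontier \<Omega>. \<exists>r>0. \<exists>\<rho>.
        C2beta_on \<beta> (ball x0 r) \<rho> \<and>
        (\<forall>x\<in>ball x0 r. grad \<rho> x \<noteq> 0) \<and>
        \<Omega> \<inter> ball x0 r = {x\<in>ball x0 r. \<rho> x < 0})"

definition solves_P :: "real \<Rightarrow> real \<Rightarrow> 'a::euclidean_space set \<Rightarrow> real \<Rightarrow> real \<Rightarrow> ('a \<Rightarrow> real) \<Rightarrow> bool" where
  "solves_P \<beta> p \<Omega> lam \<alpha> \<psi> \<longleftrightarrow>
     C2beta_closure \<beta> \<Omega> \<psi> \<and>
     (\<forall>x\<in>\<Omega>. - laplacian \<psi> x = (max (\<alpha> + lam * \<psi> x) 0) powr p) \<and>
     (\<forall>x\<in>frontier \<Omega>. \<psi> x = 0) \<and>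
     integral \<Omega> (\<lambda>x. (max (\<alpha> + lam * \<psi> x) 0) powr p) = 1"

end

theory Submission
  imports Defs
begin

(* Testing -\<Delta>\<psi> = f against K(\<psi>), where K vanishes near 0 so that K(\<psi>) has
   compact support in \<Omega>, gives  \<integral> K'(\<psi>) |\<nabla>\<psi>|\<^sup>2 = \<integral> f K(\<psi>).  For t = -\<alpha>/\<lambda> the source
   f = [\<alpha> + \<lambda>\<psi>]\<^sub>+\<^sup>p vanishes on {\<psi> \<le> t}.  Choosing K' to be trapezoids that increase to the
   indicator of (0, t), resp. (0, t], dominated convergence turns the identity into
   \<integral>\<^bsub>{0 < \<psi> < t}\<^esub> |\<nabla>\<psi>|\<^sup>2 = t \<integral> f = \<integral>\<^bsub>{0 < \<psi> \<le> t}\<^esub> |\<nabla>\<psi>|\<^sup>2.  Since f \<ge> 0, the same test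
   functions placed on the negative axis and the minimum principle show \<psi> \<ge> 0 with
   \<nabla>\<psi> = 0 on {\<psi> = 0}, so the restriction to \<psi> > 0 can be dropped; this gives the three
   identities.  The integration by parts behind the test identity reduces to
   \<integral> \<partial>\<^sub>v F = 0 for compactly supported C\<^sup>1 functions F, which follows from translation
   invariance of the integral applied to difference quotients. *)

section \<open>Piecewise quadratic cut-off functions\<close>

lemma has_real_derivative_pos_part_power2:
  "((\<lambda>t. (max t 0)\<^sup>2) has_real_derivative 2 * max t 0) (at t)"
proof -
  consider "t = 0" | "t > 0" | "t < 0" by linarith
  then show ?thesis
  proof cases
    case 1
    have "((\<lambda>y. ((max y 0)\<^sup>2 - (max 0 0)\<^sup>2) / (y - 0)) \<longlongrightarrow> 0) (at (0::real))"
    proof (rule Lim_null_comparison)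
      show "\<forall>\<^sub>F y in at 0. norm (((max y 0)\<^sup>2 - (max 0 0)\<^sup>2) / (y - 0)) \<le> \<bar>y\<bar>"
        by (rule always_eventually) (auto simp: max_def power2_eq_square abs_mult)
      show "((\<lambda>y::real. \<bar>y\<bar>) \<longlongrightarrow> 0) (at 0)"
        using tendsto_rabs[OF tendsto_ident_at[of "0::real" UNIV]] by simp
    qed
    then show ?thesis using 1 by (simp add: has_field_derivative_iff)
  next
    case 2
    have "((\<lambda>t. t\<^sup>2) has_real_derivative 2 * t) (at t)"
      by (auto intro!: derivative_eq_intros)
    from has_field_derivative_transform_within_open[OF this, of "{0<..}"]
    show ?thesis using 2 by auto
  next
    case 3
    have "((\<lambda>t. 0) has_real_derivative 0) (at t)"
      by simp
    from has_field_derivative_transform_within_open[OF this, of "{..<0}"]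
    show ?thesis using 3 by auto
  qed
qed

definition ramp :: "real \<Rightarrow> real \<Rightarrow> real \<Rightarrow> real" where
  "ramp a b s = (max (s - a) 0 - max (s - b) 0) / (b - a)"

definition ramp_primitive :: "real \<Rightarrow> real \<Rightarrow> real \<Rightarrow> real" where
  "ramp_primitive a b s = ((max (s - a) 0)\<^sup>2 - (max (s - b) 0)\<^sup>2) / (2 * (b - a))"

lemma has_real_derivative_ramp_primitive:
  "(ramp_primitive a b has_real_derivative ramp a b s) (at s)"
proof -
  have "((\<lambda>s. (max (s - c) 0)\<^sup>2) has_real_derivative 2 * max (s - c) 0 * 1) (at s)" for c
    by (rule DERIV_chain2[OF has_real_derivative_pos_part_power2]) (auto intro!: derivative_eq_intros)
  then have shifted: "((\<lambda>s. (max (s - c) 0)\<^sup>2) has_real_derivative 2 * max (s - c) 0) (at s)" for c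
    by simp
  have "(2 * max (s - a) 0 - 2 * max (s - b) 0) / (2 * (b - a)) = ramp a b s"
    by (cases "a = b") (simp_all add: ramp_def field_simps)
  with DERIV_cdivide[OF DERIV_diff[OF shifted[of a] shifted[of b]], of "2 * (b - a)"] show ?thesis
    unfolding ramp_primitive_def[abs_def] by simp
qed

lemma continuous_on_ramp: "continuous_on S (ramp a b)"
  unfolding ramp_def[abs_def] divide_inverse by (intro continuous_intros)

lemma ramp_bounds: "a < b \<Longrightarrow> 0 \<le> ramp a b s \<and> ramp a b s \<le> 1"
  by (auto simp: ramp_def max_def divide_le_eq)

lemma ramp_eq_0: "s \<le> a \<Longrightarrow> a \<le> b \<Longrightarrow> ramp a b s = 0"
  by (simp add: ramp_def)

lemma ramp_eq_1: "a < b \<Longrightarrow> b \<le> s \<Longrightarrow> ramp a b s = 1"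
  by (simp add: ramp_def)

lemma ramp_primitive_eq_0: "s \<le> a \<Longrightarrow> a \<le> b \<Longrightarrow> ramp_primitive a b s = 0"
  by (simp add: ramp_primitive_def)

lemma ramp_primitive_eq: "a < b \<Longrightarrow> b \<le> s \<Longrightarrow> ramp_primitive a b s = s - (a + b) / 2"
  by (simp add: ramp_primitive_def power2_eq_square field_simps)

lemma ramp_tendsto:
  assumes "u \<longlonglongrightarrow> t" "v \<longlonglongrightarrow> t" "\<And>n. u n < v n" "s \<noteq> t"
  shows "(\<lambda>n. ramp (u n) (v n) s) \<longlonglongrightarrow> (if t < s then 1 else 0)"
proof (rule tendsto_eventually)
  show "\<forall>\<^sub>F n in sequentially. ramp (u n) (v n) s = (if t < s then 1 else 0)"
  proof (cases "t < s")
    case True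
    then have "\<forall>\<^sub>F n in sequentially. v n < s"
      by (rule order_tendstoD(2)[OF assms(2)])
    then show ?thesis
      by eventually_elim (use True assms(3) in \<open>simp add: ramp_eq_1\<close>)
  next
    case False
    then have "\<forall>\<^sub>F n in sequentially. s < u n"
      using assms(4) by (intro order_tendstoD(1)[OF assms(1)]) simp
    then show ?thesis
      by eventually_elim (use False assms(3) in \<open>simp add: ramp_eq_0 less_imp_le\<close>)
  qed
qed

(* trapezoid e u v vanishes below e and above v, equals 1 on [2e, u] and is linear in between. *)
definition trapezoid :: "real \<Rightarrow> real \<Rightarrow> real \<Rightarrow> real \<Rightarrow> real" where
  "trapezoid e u v s = ramp e (2 * e) s - ramp u v s"

definition trapezoid_primitive :: "real \<Rightarrow> real \<Rightarrow> real \<Rightarrow> real \<Rightarrow> real" where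
  "trapezoid_primitive e u v s = ramp_primitive e (2 * e) s - ramp_primitive u v s"

lemma has_real_derivative_trapezoid_primitive:
  "(trapezoid_primitive e u v has_real_derivative trapezoid e u v s) (at s)"
  unfolding trapezoid_primitive_def[abs_def] trapezoid_def
  by (intro DERIV_diff has_real_derivative_ramp_primitive)

lemma continuous_on_trapezoid: "continuous_on S (trapezoid e u v)"
  unfolding trapezoid_def[abs_def] by (intro continuous_on_diff continuous_on_ramp)

context
  fixes e u v :: real
  assumes shape: "0 < e" "2 * e \<le> u" "u < v"
begin

lemma trapezoid_bounds: "0 \<le> trapezoid e u v s" "trapezoid e u v s \<le> 1"
proof -
  have "ramp u v s = 0 \<or> ramp e (2 * e) s = 1"
    using shape by (cases "s \<le> u") (auto intro: ramp_eq_0 ramp_eq_1)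
  then show "0 \<le> trapezoid e u v s" "trapezoid e u v s \<le> 1"
    using ramp_bounds[of u v s] ramp_bounds[of e "2 * e" s] shape
    by (auto simp: trapezoid_def)
qed

lemma trapezoid_primitive_eq_0: "s \<le> e \<Longrightarrow> trapezoid_primitive e u v s = 0"
  using shape by (simp add: trapezoid_primitive_def ramp_primitive_eq_0)

lemma trapezoid_primitive_eq_height:
  "v \<le> s \<Longrightarrow> trapezoid_primitive e u v s = (u + v) / 2 - 3 * e / 2"
  using shape by (simp add: trapezoid_primitive_def ramp_primitive_eq)

lemma trapezoid_primitive_bounds:
  "0 \<le> trapezoid_primitive e u v s" "trapezoid_primitive e u v s \<le> (u + v) / 2 - 3 * e / 2"
proof -
  have mono: "trapezoid_primitive e u v x \<le> trapezoid_primitive e u v y" if "x \<le> y" for x y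
    using DERIV_nonneg_imp_nondecreasing[OF that] has_real_derivative_trapezoid_primitive
      trapezoid_bounds(1) by blast
  show "0 \<le> trapezoid_primitive e u v s"
    using mono[of e s] trapezoid_primitive_eq_0[of e] trapezoid_primitive_eq_0[of s]
    by (cases "e \<le> s") auto
  show "trapezoid_primitive e u v s \<le> (u + v) / 2 - 3 * e / 2"
    using mono[of s v] trapezoid_primitive_eq_height[of v] trapezoid_primitive_eq_height[of s]
    by (cases "s \<le> v") auto
qed

end

section \<open>Integrals of compactly supported functions\<close>

lemma uniformly_continuous_on_UNIV_compact_support:
  fixes g :: "'a::euclidean_space \<Rightarrow> 'b::real_normed_vector"
  assumes cont: "continuous_on UNIV g" and "compact S" and zero: "\<And>x. x \<notin> S \<Longrightarrow> g x = 0"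
  shows "uniformly_continuous_on UNIV g"
  unfolding uniformly_continuous_on_def
proof (intro allI impI)
  fix e :: real assume "e > 0"
  define K where "K = {x + y | x y. x \<in> S \<and> y \<in> cball 0 1}"
  have "compact K"
    unfolding K_def using \<open>compact S\<close> compact_cball by (rule compact_sums)
  then have "uniformly_continuous_on K g"
    using cont by (intro compact_uniformly_continuous) (auto intro: continuous_on_subset)
  then obtain d where "d > 0"
    and d: "\<And>x y. x \<in> K \<Longrightarrow> y \<in> K \<Longrightarrow> dist y x < d \<Longrightarrow> dist (g y) (g x) < e"
    using \<open>e > 0\<close> unfolding uniformly_continuous_on_def by metis
  have "dist (g y) (g x) < e" if "dist y x < min d 1" for x y
  proof (cases "x \<in> S \<or> y \<in> S")
    case True
    have near: "w \<in> K" if "z \<in> S" "dist w z \<le> 1" for w z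
    proof -
      have "w = z + (w - z)" "w - z \<in> cball 0 1"
        using that by (simp_all add: dist_norm norm_minus_commute)
      then show ?thesis unfolding K_def using \<open>z \<in> S\<close> by blast
    qed
    have "x \<in> K \<and> y \<in> K"
      using True that near[of x x] near[of y x] near[of x y] near[of y y] by (auto simp: dist_commute)
    then show ?thesis using d that by auto
  next
    case False
    then show ?thesis using zero \<open>e > 0\<close> by simp
  qed
  then show "\<exists>d>0. \<forall>x\<in>UNIV. \<forall>y\<in>UNIV. dist y x < d \<longrightarrow> dist (g y) (g x) < e"
    using \<open>d > 0\<close> by (metis UNIV_I min_less_iff_conj zero_less_one)
qed

lemma has_integral_translate_compact_support:
  fixes g :: "'a::euclidean_space \<Rightarrow> real"
  assumes "continuous_on UNIV g" "compact S" "\<And>x. x \<notin> S \<Longrightarrow> g x = 0"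
  shows "((\<lambda>x. g (x + c)) has_integral integral UNIV g) UNIV"
proof -
  obtain a where S: "S \<subseteq> cbox (-a) a"
    using bounded_subset_cbox_symmetric[OF compact_imp_bounded[OF \<open>compact S\<close>]] by blast
  have box: "(g has_integral integral (cbox (-a) a) g) (cbox (-a) a)"
    using assms(1) by (auto intro: integrable_continuous continuous_on_subset)
  have "(g has_integral integral (cbox (-a) a) g) UNIV"
    using box by (rule has_integral_on_superset) (use S assms(3) in auto)
  then have "integral UNIV g = integral (cbox (-a) a) g"
    by (rule integral_unique)
  with box have "((\<lambda>x. g (x + c)) has_integral integral UNIV g) ((\<lambda>x. x - c) ` cbox (-a) a)"
    using has_integral_affinity[of g _ "-a" a 1 c] by simp
  then show ?thesis
  proof (rule has_integral_on_superset)
    fix x assume "x \<notin> (\<lambda>x. x - c) ` cbox (-a) a"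
    then have "x + c \<notin> S" using S by (metis add_diff_cancel image_eqI subsetD)
    then show "g (x + c) = 0" by (rule assms(3))
  qed simp
qed

lemma has_derivative_eq_0_if_locally_0:
  assumes "(F has_derivative F') (at x)" "open U" "x \<in> U" "\<And>y. y \<in> U \<Longrightarrow> F y = 0"
  shows "F' = (\<lambda>_. 0)"
proof -
  have "((\<lambda>_. 0) has_derivative F') (at x)"
    using assms(1-3) by (rule has_derivative_transform_within_open) (use assms(4) in auto)
  then show ?thesis
    by (rule Deriv.has_derivative_zero_unique)
qed

lemma has_integral_difference_quotient:
  fixes F :: "'a::euclidean_space \<Rightarrow> real"
  assumes "continuous_on UNIV F" "compact S" "\<And>x. x \<notin> S \<Longrightarrow> F x = 0"
  shows "((\<lambda>x. (F (x + t *\<^sub>R v) - F x) / t) has_integral 0) UNIV"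
proof -
  have "(F has_integral integral UNIV F) UNIV"
    using has_integral_translate_compact_support[OF assms, of 0] by simp
  from has_integral_diff[OF has_integral_translate_compact_support[OF assms] this]
  have "((\<lambda>x. F (x + t *\<^sub>R v) - F x) has_integral 0) UNIV"
    by simp
  from has_integral_divide[OF this, of t] show ?thesis
    by simp
qed

lemma uniform_limit_difference_quotient:
  fixes F :: "'a::real_normed_vector \<Rightarrow> real"
  assumes F: "\<And>x. (F has_derivative F' x) (at x)"
    and uc: "uniformly_continuous_on UNIV (\<lambda>x. F' x v)"
  shows "uniform_limit UNIV (\<lambda>t x. (F (x + t *\<^sub>R v) - F x) / t) (\<lambda>x. F' x v) (at_right 0)"
  unfolding uniform_limit_iff
proof (intro allI impI)
  fix e :: real assume "e > 0"
  then obtain d where "d > 0" and d: "\<And>x y. dist y x < d \<Longrightarrow> dist (F' y v) (F' x v) < e"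
    using uc unfolding uniformly_continuous_on_def by blast
  have "dist ((F (x + t *\<^sub>R v) - F x) / t) (F' x v) < e"
    if t: "0 < t" "t < d / (norm v + 1)" for t x
  proof -
    have "((\<lambda>s. F (x + s *\<^sub>R v)) has_real_derivative F' (x + s *\<^sub>R v) v) (at s)" for s
    proof -
      have "((\<lambda>s. x + s *\<^sub>R v) has_derivative (\<lambda>h. h *\<^sub>R v)) (at s)"
        by (auto intro!: derivative_eq_intros)
      from has_derivative_compose[OF this F]
      have "((\<lambda>s. F (x + s *\<^sub>R v)) has_derivative (\<lambda>h. F' (x + s *\<^sub>R v) (h *\<^sub>R v))) (at s)" .
      moreover have "(\<lambda>h. F' (x + s *\<^sub>R v) (h *\<^sub>R v)) = (*) (F' (x + s *\<^sub>R v) v)"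
        using linear_cmul[OF has_derivative_linear[OF F]] by (auto simp: fun_eq_iff)
      ultimately show ?thesis by (simp add: has_field_derivative_def)
    qed
    from MVT2[OF t(1) this] obtain s where s: "0 < s" "s < t"
      "F (x + t *\<^sub>R v) - F (x + 0 *\<^sub>R v) = (t - 0) * F' (x + s *\<^sub>R v) v"
      by blast
    have "s * norm v \<le> t * (norm v + 1)"
      using s by (intro mult_mono) auto
    also have "\<dots> < d"
      using t(2) by (simp add: pos_less_divide_eq add_nonneg_pos)
    finally have "dist (x + s *\<^sub>R v) x < d"
      using s(1) by (simp add: dist_norm)
    then show ?thesis
      using d s(3) t(1) by simp
  qed
  moreover have "d / (norm v + 1) > 0"
    using \<open>d > 0\<close> by (simp add: add_nonneg_pos)
  ultimately show "\<forall>\<^sub>F t in at_right 0. \<forall>x\<in>UNIV. dist ((F (x + t *\<^sub>R v) - F x) / t) (F' x v) < e"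
    unfolding eventually_at_right_field by blast
qed

lemma integral_derivative_compact_support:
  fixes F :: "'a::euclidean_space \<Rightarrow> real"
  assumes F: "\<And>x. (F has_derivative F' x) (at x)"
    and cont: "continuous_on UNIV (\<lambda>x. F' x v)"
    and "compact S" and zero: "\<And>x. x \<notin> S \<Longrightarrow> F x = 0"
  shows "((\<lambda>x. F' x v) has_integral 0) UNIV"
proof -
  define DQ where "DQ t x = (F (x + t *\<^sub>R v) - F x) / t" for t x
  define K where "K = {x + y | x y. x \<in> S \<and> y \<in> cball 0 (norm v)}"
  have "compact K"
    unfolding K_def using \<open>compact S\<close> compact_cball by (rule compact_sums)
  then obtain a where K: "K \<subseteq> cbox (-a) a"
    using bounded_subset_cbox_symmetric[OF compact_imp_bounded] by blast
  have K_mem: "y + z \<in> K" if "y \<in> S" "z \<in> cball 0 (norm v)" for y z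
    unfolding K_def using that by blast
  have SK: "S \<subseteq> cbox (-a) a"
    using K_mem[of _ 0] K by auto
  have F'_zero: "F' x v = 0" if "x \<notin> S" for x
    using has_derivative_eq_0_if_locally_0[OF F, of "- S"] \<open>compact S\<close> that zero
    by (auto simp: compact_imp_closed open_Compl)
  have contF: "continuous_on UNIV F"
    using F by (intro continuous_at_imp_continuous_on ballI has_derivative_continuous) blast
  have DQ_zero: "DQ t x = 0" if "x \<notin> cbox (-a) a" "0 < t" "t \<le> 1" for t x
  proof -
    have "x + t *\<^sub>R v \<notin> S"
    proof
      assume "x + t *\<^sub>R v \<in> S"
      moreover have "- (t *\<^sub>R v) \<in> cball 0 (norm v)"
        using that(2,3) by (simp add: mult_left_le_one_le)
      ultimately have "(x + t *\<^sub>R v) + - (t *\<^sub>R v) \<in> K"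
        by (rule K_mem)
      then show False using that(1) K by auto
    qed
    moreover have "x \<notin> S" using that(1) SK by blast
    ultimately show ?thesis unfolding DQ_def using zero by simp
  qed
  have DQ_integral: "(DQ t has_integral 0) (cbox (-a) a)" if "t \<in> {0<..<1}" for t
  proof -
    have "(\<lambda>x. if x \<in> cbox (-a) a then DQ t x else 0) = DQ t"
      using that by (intro ext) (simp add: DQ_zero)
    with has_integral_difference_quotient[OF contF \<open>compact S\<close> zero, where t = t and v = v] show ?thesis
      using has_integral_restrict_UNIV[of "cbox (-a) a" "DQ t" 0] by (simp add: DQ_def[abs_def])
  qed
  have unif: "uniform_limit (cbox (-a) a) DQ (\<lambda>x. F' x v) (at_right 0)"
    unfolding DQ_def[abs_def]
    using uniform_limit_difference_quotient[OF F uniformly_continuous_on_UNIV_compact_support[OF cont \<open>compact S\<close> F'_zero]]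
    by (rule uniform_limit_on_subset) auto
  have DQ_cont: "continuous_on (cbox (-a) a) (DQ t)" for t
  proof -
    have "continuous_on UNIV (\<lambda>x. F (x + t *\<^sub>R v))"
      by (rule continuous_on_compose2[OF contF]) (auto intro!: continuous_intros)
    then have "continuous_on UNIV (DQ t)"
      unfolding DQ_def divide_inverse using contF by (intro continuous_intros)
    then show ?thesis by (rule continuous_on_subset) simp
  qed
  obtain I J where I: "\<And>t. (DQ t has_integral I t) (cbox (-a) a)"
    and J: "((\<lambda>x. F' x v) has_integral J) (cbox (-a) a)" and lim: "(I \<longlongrightarrow> J) (at_right 0)"
    using uniform_limit_integral_cbox[OF unif DQ_cont trivial_limit_at_right_real] by blast
  have "I t = 0" if "t \<in> {0<..<1}" for t
    using I[of t] DQ_integral[OF that] by (rule has_integral_unique)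
  then have "(I \<longlongrightarrow> 0) (at_right 0)"
    by (intro tendsto_eventually eventually_at_rightI[of 0 1]) simp_all
  then have "J = 0"
    by (rule tendsto_unique[OF trivial_limit_at_right_real lim])
  moreover have "F' x v = 0" if "x \<notin> cbox (-a) a" for x
    using F'_zero SK that by blast
  ultimately show ?thesis
    using has_integral_on_superset[OF J _ subset_UNIV] by blast
qed

lemma integrable_on_UNIV_compact_support:
  fixes g :: "'a::euclidean_space \<Rightarrow> real"
  assumes "continuous_on UNIV g" "compact S" "\<And>x. x \<notin> S \<Longrightarrow> g x = 0"
  shows "g integrable_on UNIV"
  using has_integral_translate_compact_support[OF assms, of 0] by auto

lemma continuous_on_UNIV_extend_by_zero:
  fixes h :: "'a::topological_space \<Rightarrow> real"
  assumes "open S" "continuous_on S h" "closed T" "T \<subseteq> S"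
    and "\<And>x. x \<in> S \<Longrightarrow> x \<notin> T \<Longrightarrow> h x = 0"
  shows "continuous_on UNIV (\<lambda>x. if x \<in> S then h x else 0)"
proof -
  have "continuous_on S (\<lambda>x. if x \<in> S then h x else 0)"
    using assms(2) by (rule continuous_on_eq) simp
  moreover have "continuous_on (- T) (\<lambda>x. if x \<in> S then h x else 0)"
    using assms(5) by (intro continuous_on_eq[OF continuous_on_const[of _ 0]]) auto
  ultimately have "continuous_on (S \<union> - T) (\<lambda>x. if x \<in> S then h x else 0)"
    using assms(1,3) by (intro continuous_on_open_Un) auto
  moreover have "S \<union> - T = UNIV" using assms(4) by blast
  ultimately show ?thesis by simp
qed

lemma has_integral_0_open_imp_0:
  fixes g :: "'a::euclidean_space \<Rightarrow> real"
  assumes "open S" "continuous_on S g" "\<And>x. x \<in> S \<Longrightarrow> 0 \<le> g x" "(g has_integral 0) S" "x \<in> S"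
  shows "g x = 0"
proof -
  obtain a b where ab: "cbox a b \<subseteq> S" "x \<in> box a b" "\<forall>i\<in>Basis. a \<bullet> i < b \<bullet> i"
    by (rule open_contains_cbox[OF assms(1,5)])
  have g_S: "g integrable_on S"
    using assms(4) by (rule has_integral_integrable)
  have g_box: "g integrable_on cbox a b"
    using g_S ab(1) by (rule integrable_on_subcbox)
  have "integral (cbox a b) g \<le> integral S g"
    using assms(3) by (intro integral_subset_le[OF ab(1) g_box g_S]) blast
  moreover have "0 \<le> integral (cbox a b) g"
    by (rule integral_nonneg[OF g_box]) (use assms(3) ab(1) in blast)
  ultimately have "integral (cbox a b) g = 0"
    using integral_unique[OF assms(4)] by linarith
  then have "(g has_integral 0) (cbox a b)"
    using integrable_integral[OF g_box] by simp
  show ?thesis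
  proof (rule has_integral_0_cbox_imp_0[OF continuous_on_subset[OF assms(2) ab(1)] _ \<open>(g has_integral 0) (cbox a b)\<close>])
    show "\<And>y. y \<in> box a b \<Longrightarrow> 0 \<le> g y"
      using assms(3) ab(1) box_subset_cbox by blast
    show "box a b \<noteq> {}" "x \<in> cbox a b"
      using ab(2) box_subset_cbox by blast+
  qed
qed

lemma integral_restrict_Collect:
  fixes f :: "'a::euclidean_space \<Rightarrow> real"
  shows "integral {x \<in> S. P x} f = integral S (\<lambda>x. if P x then f x else 0)"
proof -
  have "{x \<in> S. P x} = {x. P x} \<inter> S" by auto
  then show ?thesis
    using integral_restrict_Int[of S "{x. P x}" f] by simp
qed

lemma grad_inner_Basis: "b \<in> Basis \<Longrightarrow> grad g x \<bullet> b = partial g b x"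
  unfolding grad_def by (simp add: inner_sum_left inner_Basis if_distrib sum.delta cong: if_cong)

lemma norm_grad_power2: "(norm (grad g x))\<^sup>2 = (\<Sum>b\<in>Basis. (partial g b x)\<^sup>2)"
proof -
  have "(norm (grad g x))\<^sup>2 = (\<Sum>b\<in>Basis. (grad g x \<bullet> b) * (grad g x \<bullet> b))"
    by (simp add: power2_norm_eq_inner euclidean_inner[of "grad g x" "grad g x"])
  then show ?thesis
    by (simp add: grad_inner_Basis power2_eq_square)
qed

lemma frechet_derivative_eq_grad:
  assumes "g differentiable (at x)"
  shows "frechet_derivative g (at x) = (\<lambda>h. grad g x \<bullet> h)"
proof
  fix h :: 'a
  have "linear (frechet_derivative g (at x))"
    using assms frechet_derivative_works has_derivative_linear by blast
  then have "frechet_derivative g (at x) h = (\<Sum>b\<in>Basis. (h \<bullet> b) * partial g b x)"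
    by (subst euclidean_representation[of h, symmetric]) (simp add: linear_sum linear_cmul partial_def)
  also have "\<dots> = grad g x \<bullet> h"
    by (simp add: euclidean_inner[of "grad g x" h] grad_inner_Basis mult.commute cong: sum.cong)
  finally show "frechet_derivative g (at x) h = grad g x \<bullet> h" .
qed

section \<open>The Dirichlet problem for the Poisson equation\<close>

locale dirichlet_problem =
  fixes \<Omega> :: "'a::euclidean_space set" and \<psi> f :: "'a \<Rightarrow> real"
  assumes open_domain: "open \<Omega>"
    and bounded_domain: "bounded \<Omega>"
    and differentiable: "\<And>x. x \<in> \<Omega> \<Longrightarrow> \<psi> differentiable (at x)"
    and differentiable_partial: "\<And>b x. b \<in> Basis \<Longrightarrow> x \<in> \<Omega> \<Longrightarrow> partial \<psi> b differentiable (at x)"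
    and continuous_second_partial: "\<And>b. b \<in> Basis \<Longrightarrow> continuous_on \<Omega> (partial (partial \<psi> b) b)"
    and bounded_partial: "\<And>b. b \<in> Basis \<Longrightarrow> bounded (partial \<psi> b ` \<Omega>)"
    and continuous_closure: "continuous_on (closure \<Omega>) \<psi>"
    and boundary_zero: "\<And>x. x \<in> frontier \<Omega> \<Longrightarrow> \<psi> x = 0"
    and poisson: "\<And>x. x \<in> \<Omega> \<Longrightarrow> - laplacian \<psi> x = f x"
begin

lemma continuous_on_domain: "continuous_on \<Omega> \<psi>"
  using continuous_closure closure_subset by (rule continuous_on_subset)

lemma continuous_on_partial: "b \<in> Basis \<Longrightarrow> continuous_on \<Omega> (partial \<psi> b)"
  by (intro continuous_at_imp_continuous_on ballI differentiable_imp_continuous_within differentiable_partial)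

lemma continuous_on_norm_grad_power2: "continuous_on \<Omega> (\<lambda>x. (norm (grad \<psi> x))\<^sup>2)"
  unfolding norm_grad_power2 by (intro continuous_intros continuous_on_partial)

lemma integrable_norm_grad_power2: "(\<lambda>x. (norm (grad \<psi> x))\<^sup>2) integrable_on \<Omega>"
proof -
  have "\<forall>b\<in>Basis. \<exists>B. \<forall>x\<in>\<Omega>. \<bar>partial \<psi> b x\<bar> \<le> B"
    using bounded_partial by (fastforce simp: bounded_iff)
  then obtain B where B: "\<And>b x. b \<in> Basis \<Longrightarrow> x \<in> \<Omega> \<Longrightarrow> \<bar>partial \<psi> b x\<bar> \<le> B b"
    by metis
  have "\<Omega> \<in> lmeasurable"
    using bounded_domain open_domain by (rule lmeasurable_open)
  show ?thesis
  proof (rule measurable_bounded_by_integrable_imp_integrable_real)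
    show "(\<lambda>x. (norm (grad \<psi> x))\<^sup>2) \<in> borel_measurable (lebesgue_on \<Omega>)"
      using continuous_on_norm_grad_power2 \<open>\<Omega> \<in> lmeasurable\<close>
      by (intro continuous_imp_measurable_on_sets_lebesgue fmeasurableD)
    show "\<Omega> \<in> sets lebesgue"
      using \<open>\<Omega> \<in> lmeasurable\<close> by (rule fmeasurableD)
    show "(\<lambda>x. \<Sum>b\<in>Basis. (B b)\<^sup>2) integrable_on \<Omega>"
      using \<open>\<Omega> \<in> lmeasurable\<close> by (rule integrable_on_const)
    fix x assume "x \<in> \<Omega>"
    have "(\<Sum>b\<in>Basis. (partial \<psi> b x)\<^sup>2) \<le> (\<Sum>b\<in>Basis. (B b)\<^sup>2)"
    proof (rule sum_mono)
      fix b :: 'a assume "b \<in> Basis"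
      then have "\<bar>partial \<psi> b x\<bar> \<le> \<bar>B b\<bar>"
        using B \<open>x \<in> \<Omega>\<close> by (meson abs_ge_self order_trans)
      then show "(partial \<psi> b x)\<^sup>2 \<le> (B b)\<^sup>2"
        by (simp add: abs_le_square_iff)
    qed
    then show "\<bar>(norm (grad \<psi> x))\<^sup>2\<bar> \<le> (\<Sum>b\<in>Basis. (B b)\<^sup>2)"
      by (simp add: norm_grad_power2 sum_nonneg)
  qed
qed

lemma small_near_boundary:
  assumes "\<eta> > 0"
  obtains T where "compact T" "T \<subseteq> \<Omega>" "\<And>x. x \<in> \<Omega> \<Longrightarrow> x \<notin> T \<Longrightarrow> \<bar>\<psi> x\<bar> < \<eta>"
proof
  define T where "T = {x \<in> closure \<Omega>. \<eta> \<le> \<bar>\<psi> x\<bar>}"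
  have "T = closure \<Omega> \<inter> (\<lambda>x. \<bar>\<psi> x\<bar>) -` {\<eta>..}"
    unfolding T_def by auto
  also have "closed \<dots>"
    using continuous_closure by (intro continuous_closed_preimage continuous_intros) auto
  finally have "closed T" .
  moreover have "bounded T"
    unfolding T_def using bounded_closure[OF bounded_domain] by (rule bounded_subset) auto
  ultimately show "compact T"
    by (simp add: compact_eq_bounded_closed)
  show "T \<subseteq> \<Omega>"
  proof
    fix x assume "x \<in> T"
    then show "x \<in> \<Omega>"
      using boundary_zero[of x] \<open>\<eta> > 0\<close> unfolding T_def frontier_def
      by (cases "x \<in> interior \<Omega>") (auto simp: interior_open[OF open_domain])
  qed
  show "\<bar>\<psi> x\<bar> < \<eta>" if "x \<in> \<Omega>" "x \<notin> T" for x
    using that closure_subset unfolding T_def by fastforce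
qed

(* The integrand is \<partial>\<^sub>b (K(\<psi>) \<partial>\<^sub>b\<psi>), extended by 0 outside \<Omega>. *)
lemma has_integral_divergence_term:
  fixes K K' :: "real \<Rightarrow> real"
  assumes K: "\<And>s. (K has_real_derivative K' s) (at s)" and "continuous_on UNIV K'"
    and "compact T" "T \<subseteq> \<Omega>" and vanish: "\<And>x. x \<in> \<Omega> \<Longrightarrow> x \<notin> T \<Longrightarrow> K (\<psi> x) = 0 \<and> K' (\<psi> x) = 0"
    and "b \<in> Basis"
  shows "((\<lambda>x. if x \<in> \<Omega> then K (\<psi> x) * partial (partial \<psi> b) b x + K' (\<psi> x) * (partial \<psi> b x)\<^sup>2
    else 0) has_integral 0) UNIV"
proof -
  define F where "F x = (if x \<in> \<Omega> then K (\<psi> x) * partial \<psi> b x else 0)" for x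
  define F' where "F' x = (if x \<in> \<Omega> then (\<lambda>h. K (\<psi> x) * frechet_derivative (partial \<psi> b) (at x) h
      + K' (\<psi> x) * frechet_derivative \<psi> (at x) h * partial \<psi> b x) else (\<lambda>h. 0))" for x
  have "(F has_derivative F' x) (at x)" for x
  proof (cases "x \<in> \<Omega>")
    case True
    have "((\<lambda>y. K (\<psi> y)) has_derivative (\<lambda>h. K' (\<psi> x) * frechet_derivative \<psi> (at x) h)) (at x)"
      using has_derivative_compose[OF differentiable[OF True, unfolded frechet_derivative_works]
          has_field_derivative_imp_has_derivative[OF K]] .
    from has_derivative_mult[OF this
        differentiable_partial[OF \<open>b \<in> Basis\<close> True, unfolded frechet_derivative_works]]
    have "((\<lambda>y. K (\<psi> y) * partial \<psi> b y) has_derivative F' x) (at x)"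
      using True by (simp add: F'_def)
    then show ?thesis
      using open_domain True by (rule has_derivative_transform_within_open) (simp add: F_def)
  next
    case False
    have "((\<lambda>_. 0) has_derivative F' x) (at x)"
      using False by (simp add: F'_def)
    moreover have "open (- T)" "x \<in> - T"
      using \<open>compact T\<close> \<open>T \<subseteq> \<Omega>\<close> False by (auto simp: compact_imp_closed open_Compl)
    ultimately show ?thesis
      by (rule has_derivative_transform_within_open) (simp add: F_def vanish)
  qed
  moreover have F'_eq: "(\<lambda>x. F' x b) = (\<lambda>x. if x \<in> \<Omega> then K (\<psi> x) * partial (partial \<psi> b) b x
      + K' (\<psi> x) * (partial \<psi> b x)\<^sup>2 else 0)"
    by (simp add: fun_eq_iff F'_def partial_def power2_eq_square)
  moreover have "continuous_on UNIV (\<lambda>x. F' x b)"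
  proof -
    have "continuous_on UNIV K"
      using K by (intro continuous_at_imp_continuous_on ballI DERIV_isCont) blast
    then have "continuous_on \<Omega> (\<lambda>x. K (\<psi> x) * partial (partial \<psi> b) b x + K' (\<psi> x) * (partial \<psi> b x)\<^sup>2)"
      using \<open>continuous_on UNIV K'\<close> continuous_second_partial[OF \<open>b \<in> Basis\<close>]
        continuous_on_partial[OF \<open>b \<in> Basis\<close>]
      by (intro continuous_intros continuous_on_compose2[OF _ continuous_on_domain]) auto
    from continuous_on_UNIV_extend_by_zero[OF open_domain this compact_imp_closed[OF \<open>compact T\<close>]
        \<open>T \<subseteq> \<Omega>\<close>]
    show ?thesis
      unfolding F'_eq using vanish by simp
  qed
  moreover have "F x = 0" if "x \<notin> T" for x
    using that vanish by (simp add: F_def)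
  ultimately show ?thesis
    using integral_derivative_compact_support[OF _ _ \<open>compact T\<close>, of F F' b] by simp
qed

lemma integral_test_function:
  fixes K K' :: "real \<Rightarrow> real"
  assumes K: "\<And>s. (K has_real_derivative K' s) (at s)" and "continuous_on UNIV K'"
    and "\<eta> > 0" and K_zero: "\<And>s. \<bar>s\<bar> < \<eta> \<Longrightarrow> K s = 0"
  shows "(\<lambda>x. K' (\<psi> x) * (norm (grad \<psi> x))\<^sup>2) integrable_on \<Omega>"
    and "(\<lambda>x. f x * K (\<psi> x)) integrable_on \<Omega>"
    and "integral \<Omega> (\<lambda>x. K' (\<psi> x) * (norm (grad \<psi> x))\<^sup>2) = integral \<Omega> (\<lambda>x. f x * K (\<psi> x))"
proof -
  have K'_zero: "K' s = 0" if "\<bar>s\<bar> < \<eta>" for s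
  proof -
    have "(*) (K' s) = (\<lambda>_. 0)"
      using has_derivative_eq_0_if_locally_0[OF K[unfolded has_field_derivative_def], of "{-\<eta><..<\<eta>}"]
        that K_zero by (auto simp: abs_less_iff)
    then show ?thesis by (metis mult_1_right)
  qed
  obtain T where "compact T" "T \<subseteq> \<Omega>" and T: "\<And>x. x \<in> \<Omega> \<Longrightarrow> x \<notin> T \<Longrightarrow> \<bar>\<psi> x\<bar> < \<eta>"
    using small_near_boundary[OF \<open>\<eta> > 0\<close>] by blast
  have vanish: "K (\<psi> x) = 0 \<and> K' (\<psi> x) = 0" if "x \<in> \<Omega>" "x \<notin> T" for x
    using T[OF that] K_zero K'_zero by auto
  define D where "D b x = K (\<psi> x) * partial (partial \<psi> b) b x + K' (\<psi> x) * (partial \<psi> b x)\<^sup>2" for b x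
  have "((\<lambda>x. if x \<in> \<Omega> then D b x else 0) has_integral 0) UNIV" if "b \<in> Basis" for b
    unfolding D_def
    by (rule has_integral_divergence_term[OF K \<open>continuous_on UNIV K'\<close> \<open>compact T\<close> \<open>T \<subseteq> \<Omega>\<close> vanish that])
  then have "((\<lambda>x. \<Sum>b\<in>Basis. if x \<in> \<Omega> then D b x else 0) has_integral 0) UNIV"
    using has_integral_sum[OF finite_Basis, of "\<lambda>b x. if x \<in> \<Omega> then D b x else 0" "\<lambda>_. 0" UNIV]
    by simp
  moreover have "(\<lambda>x. \<Sum>b\<in>Basis. if x \<in> \<Omega> then D b x else 0)
      = (\<lambda>x. if x \<in> \<Omega> then K' (\<psi> x) * (norm (grad \<psi> x))\<^sup>2 - f x * K (\<psi> x) else 0)"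
  proof
    fix x
    show "(\<Sum>b\<in>Basis. if x \<in> \<Omega> then D b x else 0)
        = (if x \<in> \<Omega> then K' (\<psi> x) * (norm (grad \<psi> x))\<^sup>2 - f x * K (\<psi> x) else 0)"
    proof (cases "x \<in> \<Omega>")
      case True
      then have "laplacian \<psi> x = - f x"
        using poisson[of x] by simp
      with True show ?thesis
        by (simp add: D_def sum.distrib laplacian_def norm_grad_power2 sum_distrib_left[symmetric])
    qed simp
  qed
  ultimately have "((\<lambda>x. if x \<in> \<Omega> then K' (\<psi> x) * (norm (grad \<psi> x))\<^sup>2 - f x * K (\<psi> x) else 0)
      has_integral 0) UNIV"
    by simp
  then have difference: "((\<lambda>x. K' (\<psi> x) * (norm (grad \<psi> x))\<^sup>2 - f x * K (\<psi> x)) has_integral 0) \<Omega>"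
    by (simp add: has_integral_restrict_UNIV)
  have "continuous_on \<Omega> (\<lambda>x. K' (\<psi> x) * (norm (grad \<psi> x))\<^sup>2)"
    using continuous_on_compose2[OF \<open>continuous_on UNIV K'\<close> continuous_on_domain]
      continuous_on_norm_grad_power2
    by (intro continuous_on_mult) auto
  from continuous_on_UNIV_extend_by_zero[OF open_domain this compact_imp_closed[OF \<open>compact T\<close>]
      \<open>T \<subseteq> \<Omega>\<close>]
  have "(\<lambda>x. if x \<in> \<Omega> then K' (\<psi> x) * (norm (grad \<psi> x))\<^sup>2 else 0) integrable_on UNIV"
    using \<open>compact T\<close> vanish by (intro integrable_on_UNIV_compact_support) auto
  then show energy: "(\<lambda>x. K' (\<psi> x) * (norm (grad \<psi> x))\<^sup>2) integrable_on \<Omega>"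
    by (simp add: integrable_restrict_UNIV)
  from has_integral_diff[OF integrable_integral[OF energy] difference]
  have "((\<lambda>x. f x * K (\<psi> x)) has_integral integral \<Omega> (\<lambda>x. K' (\<psi> x) * (norm (grad \<psi> x))\<^sup>2)) \<Omega>"
    by simp
  then show "(\<lambda>x. f x * K (\<psi> x)) integrable_on \<Omega>"
    and "integral \<Omega> (\<lambda>x. K' (\<psi> x) * (norm (grad \<psi> x))\<^sup>2) = integral \<Omega> (\<lambda>x. f x * K (\<psi> x))"
    by (rule has_integral_integrable, rule integral_unique[symmetric])
qed

end

section \<open>Nonnegative sources\<close>

locale superharmonic_dirichlet_problem = dirichlet_problem +
  assumes connected_domain: "connected \<Omega>"
    and source_nonneg: "\<And>x. x \<in> \<Omega> \<Longrightarrow> 0 \<le> f x"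
begin

lemma grad_eq_0_if_negative:
  assumes x: "x \<in> \<Omega>" "\<psi> x < 0"
  shows "grad \<psi> x = 0"
proof -
  define \<eta> where "\<eta> = - \<psi> x / 2"
  define K where "K s = - (max (- s - \<eta>) 0)\<^sup>2 / 2" for s
  define K' where "K' s = max (- s - \<eta>) 0" for s
  have "\<eta> > 0" using x by (simp add: \<eta>_def)
  have K: "(K has_real_derivative K' s) (at s)" for s
  proof -
    have "((\<lambda>s. (max (- s - \<eta>) 0)\<^sup>2) has_real_derivative 2 * max (- s - \<eta>) 0 * (-1)) (at s)"
      by (rule DERIV_chain2[OF has_real_derivative_pos_part_power2]) (auto intro!: derivative_eq_intros)
    from DERIV_cdivide[OF DERIV_minus[OF this], of 2] show ?thesis
      by (simp add: K_def[abs_def] K'_def)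
  qed
  have K_zero: "K s = 0" if "\<bar>s\<bar> < \<eta>" for s
    using that by (simp add: K_def)
  have K'_cont: "continuous_on UNIV K'"
    unfolding K'_def by (intro continuous_intros)
  note test = integral_test_function[OF K K'_cont \<open>\<eta> > 0\<close> K_zero]
  have "integral \<Omega> (\<lambda>y. f y * K (\<psi> y)) \<le> integral \<Omega> (\<lambda>_. 0)"
    using test(2) source_nonneg by (intro integral_le) (auto simp: K_def mult_nonneg_nonpos integrable_0)
  moreover have "0 \<le> integral \<Omega> (\<lambda>y. K' (\<psi> y) * (norm (grad \<psi> y))\<^sup>2)"
    using test(1) by (intro integral_nonneg) (auto simp: K'_def)
  ultimately have "((\<lambda>y. K' (\<psi> y) * (norm (grad \<psi> y))\<^sup>2) has_integral 0) \<Omega>"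
    using test(1,3) integrable_integral by fastforce
  moreover have "continuous_on \<Omega> (\<lambda>y. K' (\<psi> y) * (norm (grad \<psi> y))\<^sup>2)"
    using continuous_on_compose2[OF K'_cont continuous_on_domain] continuous_on_norm_grad_power2
    by (intro continuous_on_mult) auto
  ultimately have "K' (\<psi> x) * (norm (grad \<psi> x))\<^sup>2 = 0"
    using open_domain x(1) by (intro has_integral_0_open_imp_0) (auto simp: K'_def)
  moreover have "K' (\<psi> x) > 0"
    using x by (simp add: K'_def \<eta>_def)
  ultimately show ?thesis by simp
qed

lemma locally_constant_if_negative:
  assumes "y \<in> \<Omega>" "\<psi> y < 0"
  shows "\<exists>e>0. ball y e \<subseteq> \<Omega> \<and> (\<forall>z\<in>ball y e. \<psi> z = \<psi> y)"
proof -
  define U where "U = \<Omega> \<inter> \<psi> -` {..<0}"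
  have "open U"
    unfolding U_def using continuous_on_domain open_domain by (rule continuous_open_preimage) auto
  moreover have "y \<in> U"
    using assms by (simp add: U_def)
  ultimately obtain e where "e > 0" "ball y e \<subseteq> U"
    by (meson open_contains_ball)
  have "(\<psi> has_derivative (\<lambda>h. 0)) (at z within ball y e)" if "z \<in> ball y e" for z
  proof -
    have "z \<in> \<Omega>" "\<psi> z < 0"
      using that \<open>ball y e \<subseteq> U\<close> by (auto simp: U_def)
    then have "frechet_derivative \<psi> (at z) = (\<lambda>h. 0)"
      by (simp add: frechet_derivative_eq_grad differentiable grad_eq_0_if_negative)
    then have "(\<psi> has_derivative (\<lambda>h. 0)) (at z)"
      using differentiable[OF \<open>z \<in> \<Omega>\<close>] frechet_derivative_works by metis
    then show ?thesis
      by (rule has_derivative_at_withinI)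
  qed
  then have "\<psi> z = \<psi> y" if "z \<in> ball y e" for z
    using that \<open>e > 0\<close> by (intro has_derivative_zero_unique[of "ball y e" \<psi>]) auto
  moreover have "ball y e \<subseteq> \<Omega>"
    using \<open>ball y e \<subseteq> U\<close> by (auto simp: U_def)
  ultimately show ?thesis
    using \<open>e > 0\<close> by blast
qed

lemma solution_nonneg:
  assumes "x \<in> \<Omega>"
  shows "0 \<le> \<psi> x"
proof (rule ccontr)
  assume "\<not> 0 \<le> \<psi> x"
  have "compact (closure \<Omega>)"
    using bounded_closure[OF bounded_domain] by (simp add: compact_eq_bounded_closed)
  moreover have "closure \<Omega> \<noteq> {}"
    using assms by auto
  ultimately obtain x0 where x0: "x0 \<in> closure \<Omega>" "\<And>y. y \<in> closure \<Omega> \<Longrightarrow> \<psi> x0 \<le> \<psi> y"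
    using continuous_attains_inf[OF _ _ continuous_closure] by blast
  define m where "m = \<psi> x0"
  have "m < 0"
    using x0(2)[of x] assms closure_subset \<open>\<not> 0 \<le> \<psi> x\<close> unfolding m_def by fastforce
  have frontier_ne_m: "\<psi> y \<noteq> m" if "y \<in> frontier \<Omega>" for y
    using boundary_zero[OF that] \<open>m < 0\<close> by simp
  have "x0 \<in> \<Omega>"
    using x0(1) frontier_ne_m[of x0] by (auto simp: m_def frontier_def interior_open[OF open_domain])
  define A where "A = {y \<in> \<Omega>. \<psi> y = m}"
  have "open A"
    unfolding open_contains_ball
  proof
    fix y assume "y \<in> A"
    then have "y \<in> \<Omega>" "\<psi> y < 0"
      using \<open>m < 0\<close> by (simp_all add: A_def)
    then obtain e where "e > 0" "ball y e \<subseteq> \<Omega>" "\<forall>z\<in>ball y e. \<psi> z = \<psi> y"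
      using locally_constant_if_negative by blast
    have "\<psi> z = m" if "z \<in> ball y e" for z
      using bspec[OF \<open>\<forall>z\<in>ball y e. \<psi> z = \<psi> y\<close> that] \<open>y \<in> A\<close> by (simp add: A_def)
    then have "ball y e \<subseteq> A"
      using \<open>ball y e \<subseteq> \<Omega>\<close> by (auto simp: A_def)
    then show "\<exists>e>0. ball y e \<subseteq> A"
      using \<open>e > 0\<close> by blast
  qed
  have "closedin (top_of_set \<Omega>) A"
    unfolding A_def using continuous_on_domain by (rule continuous_closedin_preimage_constant)
  moreover have "x0 \<in> A"
    using \<open>x0 \<in> \<Omega>\<close> by (simp add: A_def m_def)
  moreover have "openin (top_of_set \<Omega>) A"
    by (rule open_subset[OF _ \<open>open A\<close>]) (auto simp: A_def)
  ultimately have "A = \<Omega>"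
    using connected_domain unfolding connected_clopen by blast
  have "closure \<Omega> \<subseteq> {y \<in> closure \<Omega>. \<psi> y = m}"
  proof (rule closure_minimal)
    show "\<Omega> \<subseteq> {y \<in> closure \<Omega>. \<psi> y = m}"
      using \<open>A = \<Omega>\<close> closure_subset by (auto simp: A_def)
    show "closed {y \<in> closure \<Omega>. \<psi> y = m}"
      using continuous_closure by (rule continuous_closed_preimage_constant) simp
  qed
  moreover have "\<Omega> \<noteq> UNIV"
    using bounded_domain not_bounded_UNIV by blast
  then obtain y where "y \<in> frontier \<Omega>"
    using frontier_not_empty[of \<Omega>] assms by blast
  ultimately show False
    using frontier_ne_m[of y] by (auto simp: frontier_def)
qed

lemma grad_eq_0_if_nonpos:
  assumes "x \<in> \<Omega>" "\<psi> x \<le> 0"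
  shows "grad \<psi> x = 0"
proof -
  have "\<forall>y\<in>\<Omega>. \<psi> x \<le> \<psi> y"
    using assms solution_nonneg by fastforce
  moreover have "(\<psi> has_derivative frechet_derivative \<psi> (at x)) (at x)"
    using differentiable[OF assms(1)] frechet_derivative_works by blast
  ultimately have "frechet_derivative \<psi> (at x) = (\<lambda>v. 0)"
    using differential_zero_maxmin[OF assms(1) open_domain] by blast
  then show ?thesis
    by (simp add: grad_def partial_def)
qed

lemma integral_trapezoid_test:
  assumes shape: "0 < e" "2 * e \<le> u" "u < v"
  shows "(\<lambda>x. trapezoid e u v (\<psi> x) * (norm (grad \<psi> x))\<^sup>2) integrable_on \<Omega>"
    and "(\<lambda>x. f x * trapezoid_primitive e u v (\<psi> x)) integrable_on \<Omega>"
    and "integral \<Omega> (\<lambda>x. trapezoid e u v (\<psi> x) * (norm (grad \<psi> x))\<^sup>2)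
      = integral \<Omega> (\<lambda>x. f x * trapezoid_primitive e u v (\<psi> x))"
proof -
  have "trapezoid_primitive e u v s = 0" if "\<bar>s\<bar> < e" for s
    using that trapezoid_primitive_eq_0[OF shape] by simp
  note test = integral_test_function[OF has_real_derivative_trapezoid_primitive continuous_on_trapezoid
      \<open>0 < e\<close> this]
  show "(\<lambda>x. trapezoid e u v (\<psi> x) * (norm (grad \<psi> x))\<^sup>2) integrable_on \<Omega>"
    by (rule test(1))
  show "(\<lambda>x. f x * trapezoid_primitive e u v (\<psi> x)) integrable_on \<Omega>"
    by (rule test(2))
  show "integral \<Omega> (\<lambda>x. trapezoid e u v (\<psi> x) * (norm (grad \<psi> x))\<^sup>2)
      = integral \<Omega> (\<lambda>x. f x * trapezoid_primitive e u v (\<psi> x))"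
    by (rule test(3))
qed

lemma tendsto_integral_trapezoid_energy:
  fixes e u v :: "nat \<Rightarrow> real" and r :: "'a \<Rightarrow> real"
  assumes shape: "\<And>n. 0 < e n" "\<And>n. 2 * e n \<le> u n" "\<And>n. u n < v n" and "e \<longlonglongrightarrow> 0"
    and r: "\<And>x. x \<in> \<Omega> \<Longrightarrow> (\<lambda>n. ramp (u n) (v n) (\<psi> x)) \<longlonglongrightarrow> r x"
  shows "(\<lambda>x. (1 - r x) * (norm (grad \<psi> x))\<^sup>2) integrable_on \<Omega>"
    and "(\<lambda>n. integral \<Omega> (\<lambda>x. trapezoid (e n) (u n) (v n) (\<psi> x) * (norm (grad \<psi> x))\<^sup>2))
      \<longlonglongrightarrow> integral \<Omega> (\<lambda>x. (1 - r x) * (norm (grad \<psi> x))\<^sup>2)"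
proof -
  define H where "H x = (norm (grad \<psi> x))\<^sup>2" for x
  have H_integrable: "H integrable_on \<Omega>"
    unfolding H_def[abs_def] by (rule integrable_norm_grad_power2)
  have bound: "norm (trapezoid (e n) (u n) (v n) (\<psi> x) * H x) \<le> H x" if "x \<in> \<Omega>" for n x
    using trapezoid_bounds[OF shape[of n], of "\<psi> x"]
    by (simp add: H_def abs_mult mult_left_le_one_le)
  have limit: "(\<lambda>n. trapezoid (e n) (u n) (v n) (\<psi> x) * H x) \<longlonglongrightarrow> (1 - r x) * H x"
    if "x \<in> \<Omega>" for x
  proof (cases "\<psi> x \<le> 0")
    case True
    then show ?thesis
      using grad_eq_0_if_nonpos[OF that] by (simp add: H_def)
  next
    case False
    have "(\<lambda>n. 2 * e n) \<longlonglongrightarrow> 2 * 0"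
      by (intro tendsto_intros \<open>e \<longlonglongrightarrow> 0\<close>)
    then have "\<forall>\<^sub>F n in sequentially. 2 * e n < \<psi> x"
      using False by (intro order_tendstoD(2)[OF \<open>(\<lambda>n. 2 * e n) \<longlonglongrightarrow> 2 * 0\<close>]) simp
    then have "\<forall>\<^sub>F n in sequentially.
        (1 - ramp (u n) (v n) (\<psi> x)) * H x = trapezoid (e n) (u n) (v n) (\<psi> x) * H x"
      by eventually_elim (use shape in \<open>simp add: trapezoid_def ramp_eq_1\<close>)
    moreover have "(\<lambda>n. (1 - ramp (u n) (v n) (\<psi> x)) * H x) \<longlonglongrightarrow> (1 - r x) * H x"
      by (intro tendsto_intros r that)
    ultimately show ?thesis
      by (rule Lim_transform_eventually[rotated])
  qed
  have "(\<lambda>x. trapezoid (e n) (u n) (v n) (\<psi> x) * H x) integrable_on \<Omega>" for n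
    using integral_trapezoid_test(1)[OF shape[of n]] by (simp add: H_def)
  note dominated = dominated_convergence[OF this H_integrable bound limit]
  then show "(\<lambda>x. (1 - r x) * (norm (grad \<psi> x))\<^sup>2) integrable_on \<Omega>"
    and "(\<lambda>n. integral \<Omega> (\<lambda>x. trapezoid (e n) (u n) (v n) (\<psi> x) * (norm (grad \<psi> x))\<^sup>2))
      \<longlonglongrightarrow> integral \<Omega> (\<lambda>x. (1 - r x) * (norm (grad \<psi> x))\<^sup>2)"
    by (simp_all add: H_def)
qed

lemma tendsto_integral_trapezoid_source:
  fixes e u v :: "nat \<Rightarrow> real"
  assumes f_zero: "\<And>x. x \<in> \<Omega> \<Longrightarrow> \<psi> x \<le> t \<Longrightarrow> f x = 0" and "f integrable_on \<Omega>"
    and shape: "\<And>n. 0 < e n" "\<And>n. 2 * e n \<le> u n" "\<And>n. u n < v n"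
    and lim: "e \<longlonglongrightarrow> 0" "u \<longlonglongrightarrow> t" "v \<longlonglongrightarrow> t"
  shows "(\<lambda>n. integral \<Omega> (\<lambda>x. f x * trapezoid_primitive (e n) (u n) (v n) (\<psi> x)))
    \<longlonglongrightarrow> t * integral \<Omega> f"
proof -
  define K where "K n = trapezoid_primitive (e n) (u n) (v n)" for n
  obtain C where C: "\<And>n. \<bar>v n\<bar> \<le> C"
  proof -
    obtain B where "\<forall>n. norm (v n) \<le> B"
      using BseqD[OF convergent_imp_Bseq[OF convergentI[OF lim(3)]]] by blast
    then show ?thesis
      by (intro that[of B]) simp
  qed
  have "(\<lambda>n. integral \<Omega> (\<lambda>x. f x * K n (\<psi> x))) \<longlonglongrightarrow> integral \<Omega> (\<lambda>x. f x * t)"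
  proof (rule dominated_convergence(2))
    show "(\<lambda>x. f x * K n (\<psi> x)) integrable_on \<Omega>" for n
      unfolding K_def by (rule integral_trapezoid_test(2)[OF shape])
    show "(\<lambda>x. C * f x) integrable_on \<Omega>"
      using integrable_on_cmult_left[OF \<open>f integrable_on \<Omega>\<close>, of C] by simp
    show "norm (f x * K n (\<psi> x)) \<le> C * f x" if "x \<in> \<Omega>" for n x
    proof -
      have "K n (\<psi> x) \<le> C"
        using trapezoid_primitive_bounds(2)[OF shape[of n], of "\<psi> x"] shape[of n] C[of n]
          abs_ge_self[of "v n"]
        unfolding K_def by argo
      then have "f x * K n (\<psi> x) \<le> f x * C"
        using source_nonneg[OF that] by (rule mult_left_mono)
      moreover have "0 \<le> f x * K n (\<psi> x)"
        using trapezoid_primitive_bounds(1)[OF shape[of n], of "\<psi> x"] source_nonneg[OF that]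
        by (simp add: K_def)
      ultimately show ?thesis
        by (simp add: mult.commute)
    qed
    show "(\<lambda>n. f x * K n (\<psi> x)) \<longlonglongrightarrow> f x * t" if "x \<in> \<Omega>" for x
    proof (cases "\<psi> x \<le> t")
      case True
      then show ?thesis using f_zero[OF that] by simp
    next
      case False
      then have "\<forall>\<^sub>F n in sequentially. v n < \<psi> x"
        by (intro order_tendstoD(2)[OF lim(3)]) simp
      then have "\<forall>\<^sub>F n in sequentially. f x * ((u n + v n) / 2 - 3 * e n / 2) = f x * K n (\<psi> x)"
        by eventually_elim (simp add: K_def trapezoid_primitive_eq_height shape less_imp_le)
      moreover have "(\<lambda>n. f x * ((u n + v n) / 2 - 3 * e n / 2)) \<longlonglongrightarrow> f x * ((t + t) / 2 - 3 * 0 / 2)"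
        by (intro tendsto_intros lim) simp_all
      ultimately have "(\<lambda>n. f x * K n (\<psi> x)) \<longlonglongrightarrow> f x * ((t + t) / 2 - 3 * 0 / 2)"
        by (rule Lim_transform_eventually[rotated])
      then show ?thesis
        by simp
    qed
  qed
  then show ?thesis
    by (simp add: K_def mult.commute)
qed

lemma integral_trapezoid_limit:
  fixes e u v :: "nat \<Rightarrow> real" and r :: "'a \<Rightarrow> real"
  assumes f_zero: "\<And>x. x \<in> \<Omega> \<Longrightarrow> \<psi> x \<le> t \<Longrightarrow> f x = 0" and "f integrable_on \<Omega>"
    and shape: "\<And>n. 0 < e n" "\<And>n. 2 * e n \<le> u n" "\<And>n. u n < v n"
    and lim: "e \<longlonglongrightarrow> 0" "u \<longlonglongrightarrow> t" "v \<longlonglongrightarrow> t"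
    and r: "\<And>x. x \<in> \<Omega> \<Longrightarrow> (\<lambda>n. ramp (u n) (v n) (\<psi> x)) \<longlonglongrightarrow> r x"
  shows "(\<lambda>x. (1 - r x) * (norm (grad \<psi> x))\<^sup>2) integrable_on \<Omega>"
    and "integral \<Omega> (\<lambda>x. (1 - r x) * (norm (grad \<psi> x))\<^sup>2) = t * integral \<Omega> f"
proof -
  note energy = tendsto_integral_trapezoid_energy[OF shape lim(1) r]
  show "(\<lambda>x. (1 - r x) * (norm (grad \<psi> x))\<^sup>2) integrable_on \<Omega>"
    by (rule energy(1))
  have "(\<lambda>n. integral \<Omega> (\<lambda>x. trapezoid (e n) (u n) (v n) (\<psi> x) * (norm (grad \<psi> x))\<^sup>2))
      \<longlonglongrightarrow> t * integral \<Omega> f"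
    using tendsto_integral_trapezoid_source[OF f_zero \<open>f integrable_on \<Omega>\<close> shape lim]
    by (simp only: integral_trapezoid_test(3)[OF shape])
  with energy(2) show "integral \<Omega> (\<lambda>x. (1 - r x) * (norm (grad \<psi> x))\<^sup>2) = t * integral \<Omega> f"
    by (rule LIMSEQ_unique)
qed

lemma integral_sublevel_sets:
  assumes "t > 0" and f_zero: "\<And>x. x \<in> \<Omega> \<Longrightarrow> \<psi> x \<le> t \<Longrightarrow> f x = 0" and "f integrable_on \<Omega>"
  shows "(\<lambda>x. if \<psi> x < t then (norm (grad \<psi> x))\<^sup>2 else 0) integrable_on \<Omega>"
    and "integral \<Omega> (\<lambda>x. if \<psi> x < t then (norm (grad \<psi> x))\<^sup>2 else 0) = t * integral \<Omega> f"
    and "(\<lambda>x. if \<psi> x \<le> t then (norm (grad \<psi> x))\<^sup>2 else 0) integrable_on \<Omega>"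
    and "integral \<Omega> (\<lambda>x. if \<psi> x \<le> t then (norm (grad \<psi> x))\<^sup>2 else 0) = t * integral \<Omega> f"
proof -
  define H where "H x = (norm (grad \<psi> x))\<^sup>2" for x
  define e where "e n = t / 4 * inverse (real (Suc n))" for n
  have e_pos: "0 < e n" for n
    using \<open>t > 0\<close> by (simp add: e_def)
  have e_small: "e n \<le> t / 4" for n
    using \<open>t > 0\<close> by (simp add: e_def mult_left_le_one_le inverse_le_1_iff)
  have "e \<longlonglongrightarrow> t / 4 * 0"
    unfolding e_def[abs_def] by (intro tendsto_intros LIMSEQ_inverse_real_of_nat)
  then have e_lim: "e \<longlonglongrightarrow> 0" by simp
  have u_lim: "(\<lambda>n. t - e n) \<longlonglongrightarrow> t" and v_lim: "(\<lambda>n. t + e n) \<longlonglongrightarrow> t"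
    using tendsto_diff[OF tendsto_const e_lim, of t] tendsto_add[OF tendsto_const e_lim, of t] by simp_all
  have shape: "2 * e n \<le> t - e n" "2 * e n \<le> t" "t - e n < t" "t < t + e n" for n
    using e_pos[of n] e_small[of n] by linarith+
  have "(\<lambda>n. ramp (t - e n) t (\<psi> x)) \<longlonglongrightarrow> (if t \<le> \<psi> x then 1 else 0)" for x
  proof (cases "\<psi> x = t")
    case True
    then show ?thesis by (simp add: ramp_eq_1 e_pos)
  next
    case False
    then have "(if t < \<psi> x then 1 else 0) = (if t \<le> \<psi> x then 1 else (0::real))"
      by auto
    with ramp_tendsto[OF u_lim tendsto_const shape(3) False] show ?thesis
      by simp
  qed
  note below = integral_trapezoid_limit[OF f_zero \<open>f integrable_on \<Omega>\<close> e_pos shape(1,3)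
      e_lim u_lim tendsto_const this]
  have "(\<lambda>n. ramp t (t + e n) (\<psi> x)) \<longlonglongrightarrow> (if t < \<psi> x then 1 else 0)" for x
  proof (cases "\<psi> x = t")
    case True
    then show ?thesis by (simp add: ramp_eq_0 e_pos less_imp_le)
  next
    case False
    then show ?thesis
      using ramp_tendsto[OF tendsto_const v_lim shape(4) False] by simp
  qed
  note above = integral_trapezoid_limit[OF f_zero \<open>f integrable_on \<Omega>\<close> e_pos shape(2,4)
      e_lim tendsto_const v_lim this]
  have "(\<lambda>x. (1 - (if t \<le> \<psi> x then 1 else 0)) * H x) = (\<lambda>x. if \<psi> x < t then H x else 0)"
    "(\<lambda>x. (1 - (if t < \<psi> x then 1 else 0)) * H x) = (\<lambda>x. if \<psi> x \<le> t then H x else 0)"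
    by (auto simp: fun_eq_iff)
  then show "(\<lambda>x. if \<psi> x < t then (norm (grad \<psi> x))\<^sup>2 else 0) integrable_on \<Omega>"
    and "integral \<Omega> (\<lambda>x. if \<psi> x < t then (norm (grad \<psi> x))\<^sup>2 else 0) = t * integral \<Omega> f"
    and "(\<lambda>x. if \<psi> x \<le> t then (norm (grad \<psi> x))\<^sup>2 else 0) integrable_on \<Omega>"
    and "integral \<Omega> (\<lambda>x. if \<psi> x \<le> t then (norm (grad \<psi> x))\<^sup>2 else 0) = t * integral \<Omega> f"
    using below above unfolding H_def by simp_all
qed

lemma integral_level_sets:
  assumes "t > 0" and f_zero: "\<And>x. x \<in> \<Omega> \<Longrightarrow> \<psi> x \<le> t \<Longrightarrow> f x = 0" and "f integrable_on \<Omega>"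
  shows "integral {x \<in> \<Omega>. \<psi> x < t} (\<lambda>x. (norm (grad \<psi> x))\<^sup>2) = t * integral \<Omega> f"
    and "integral {x \<in> \<Omega>. \<psi> x = t} (\<lambda>x. (norm (grad \<psi> x))\<^sup>2) = 0"
    and "integral {x \<in> \<Omega>. t < \<psi> x} (\<lambda>x. (norm (grad \<psi> x))\<^sup>2)
      = integral \<Omega> (\<lambda>x. (norm (grad \<psi> x))\<^sup>2) - t * integral \<Omega> f"
proof -
  define H where "H x = (norm (grad \<psi> x))\<^sup>2" for x
  note lt = integral_sublevel_sets(1,2)[OF assms, folded H_def]
  note le = integral_sublevel_sets(3,4)[OF assms, folded H_def]
  show "integral {x \<in> \<Omega>. \<psi> x < t} (\<lambda>x. (norm (grad \<psi> x))\<^sup>2) = t * integral \<Omega> f"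
    using lt(2) unfolding H_def by (simp add: integral_restrict_Collect)
  have "(\<lambda>x. if \<psi> x = t then H x else 0)
      = (\<lambda>x. (if \<psi> x \<le> t then H x else 0) - (if \<psi> x < t then H x else 0))"
    by (auto simp: fun_eq_iff)
  then show "integral {x \<in> \<Omega>. \<psi> x = t} (\<lambda>x. (norm (grad \<psi> x))\<^sup>2) = 0"
    using integral_diff[OF le(1) lt(1)] le(2) lt(2) unfolding H_def
    by (simp add: integral_restrict_Collect)
  have "(\<lambda>x. if t < \<psi> x then H x else 0) = (\<lambda>x. H x - (if \<psi> x \<le> t then H x else 0))"
    by (auto simp: fun_eq_iff)
  moreover have "H integrable_on \<Omega>"
    unfolding H_def[abs_def] by (rule integrable_norm_grad_power2)
  ultimately show "integral {x \<in> \<Omega>. t < \<psi> x} (\<lambda>x. (norm (grad \<psi> x))\<^sup>2)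
      = integral \<Omega> (\<lambda>x. (norm (grad \<psi> x))\<^sup>2) - t * integral \<Omega> f"
    using integral_diff[OF _ le(1)] le(2) unfolding H_def
    by (simp add: integral_restrict_Collect)
qed

end

lemma holder_on_imp_continuous_on:
  assumes "0 < \<beta>" "holder_on \<beta> S g"
  shows "continuous_on S g"
proof -
  obtain C where C: "\<And>x y. x \<in> S \<Longrightarrow> y \<in> S \<Longrightarrow> \<bar>g x - g y\<bar> \<le> C * dist x y powr \<beta>"
    using assms(2) unfolding holder_on_def by blast
  have "(g \<longlongrightarrow> g x) (at x within S)" if "x \<in> S" for x
  proof -
    have "((\<lambda>y. dist y x powr \<beta>) \<longlongrightarrow> 0) (at x within S)"
      using assms(1) by (intro tendsto_zero_powrI tendsto_dist_iff[THEN iffD1] tendsto_ident_at) auto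
    then have "((\<lambda>y. C * dist y x powr \<beta>) \<longlongrightarrow> 0) (at x within S)"
      by (rule tendsto_mult_right_zero)
    moreover have "\<forall>\<^sub>F y in at x within S. norm (g y - g x) \<le> C * dist y x powr \<beta>"
      using C[OF _ that] by (auto simp: eventually_at_filter)
    ultimately have "((\<lambda>y. g y - g x) \<longlongrightarrow> 0) (at x within S)"
      by (rule Lim_null_comparison[rotated])
    then show ?thesis
      by (simp add: LIM_zero_iff)
  qed
  then show ?thesis
    by (simp add: continuous_on_def)
qed

lemma solves_P_imp_superharmonic_dirichlet_problem:
  assumes "0 < \<beta>" "C2beta_domain \<beta> \<Omega>" "solves_P \<beta> p \<Omega> lam \<alpha> \<psi>"
  shows "superharmonic_dirichlet_problem \<Omega> \<psi> (\<lambda>x. (max (\<alpha> + lam * \<psi> x) 0) powr p)"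
proof -
  have \<Omega>: "open \<Omega>" "connected \<Omega>" "bounded \<Omega>"
    using assms(2) by (auto simp: C2beta_domain_def)
  have \<psi>: "C2beta_on \<beta> \<Omega> \<psi>" "continuous_on (closure \<Omega>) \<psi>"
      "\<And>b. b \<in> Basis \<Longrightarrow> uniformly_continuous_on \<Omega> (partial \<psi> b)"
    using assms(3) by (auto simp: solves_P_def C2beta_closure_def)
  show ?thesis
  proof (unfold_locales)
    show "\<And>b. b \<in> Basis \<Longrightarrow> continuous_on \<Omega> (partial (partial \<psi> b) b)"
      using \<psi>(1) assms(1) by (auto simp: C2beta_on_def intro: holder_on_imp_continuous_on)
    show "\<And>b. b \<in> Basis \<Longrightarrow> bounded (partial \<psi> b ` \<Omega>)"
      using \<psi>(3) \<Omega>(3) by (rule bounded_uniformly_continuous_image)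
  qed (use \<Omega> \<psi> assms(3) in \<open>auto simp: C2beta_on_def solves_P_def\<close>)
qed

theorem lemma2p1:
  fixes \<Omega> :: "'a::euclidean_space set" and \<beta> p lam \<alpha> :: real and \<psi> :: "'a \<Rightarrow> real"
  assumes "0 < \<beta>" "\<beta> < 1"
    and "C2beta_domain \<beta> \<Omega>"
    and "p \<ge> 1" "lam > 0"
    and "solves_P \<beta> p \<Omega> lam \<alpha> \<psi>"
    and "\<alpha> < 0"
  shows "2 * ((1/2) * integral \<Omega> (\<lambda>x. (norm (grad \<psi> x))\<^sup>2))
           = integral {x\<in>\<Omega>. \<alpha> + lam * \<psi> x > 0} (\<lambda>x. (norm (grad \<psi> x))\<^sup>2) - \<alpha> / lam
    \<and> integral {x\<in>\<Omega>. \<alpha> + lam * \<psi> x < 0} (\<lambda>x. (norm (grad \<psi> x))\<^sup>2) = - \<alpha> / lam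
    \<and> integral {x\<in>\<Omega>. \<alpha> + lam * \<psi> x = 0} (\<lambda>x. (norm (grad \<psi> x))\<^sup>2) = 0"
proof -
  define f where "f x = (max (\<alpha> + lam * \<psi> x) 0) powr p" for x
  define c where "c = - \<alpha> / lam"
  interpret superharmonic_dirichlet_problem \<Omega> \<psi> f
    unfolding f_def by (rule solves_P_imp_superharmonic_dirichlet_problem[OF assms(1,3,6)])
  have level: "\<alpha> + lam * s > 0 \<longleftrightarrow> c < s" "\<alpha> + lam * s < 0 \<longleftrightarrow> s < c" "\<alpha> + lam * s = 0 \<longleftrightarrow> s = c" for s
    using \<open>lam > 0\<close> by (auto simp: c_def field_simps)
  have "c > 0"
    using assms(5,7) by (simp add: c_def divide_neg_pos)
  moreover have "f x = 0" if "\<psi> x \<le> c" for x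
    using that level(1)[of "\<psi> x"] by (simp add: f_def max_def)
  moreover have "integral \<Omega> f = 1"
    using assms(6) by (simp add: solves_P_def f_def[abs_def])
  moreover then have "f integrable_on \<Omega>"
    using not_integrable_integral by fastforce
  ultimately show ?thesis
    using integral_level_sets[of c] by (simp add: level c_def)
qed

end
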